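(* Assume $N\ge 2$ and $2\beta T>1$, and let $S\ge 1$ be an integer. (a) The Fixed-Share Forecaster (FSF) with parameters \[ \alpha=\frac1T,\qquad \gamma=\frac{1}{2\beta T},\qquad \eta=\sqrt{\frac{\log(NT)}{4\beta^2T\log\left(2\beta TN^3+N+2\right)}} \] satisfies, for every demand sequence $d_1,\dots,d_T\in\mathcal D$, \[ \mathbb E[\mathcal R_S(T)]\le 2(S+1)\beta\sqrt{T\log(NT)\log\left(2\beta TN^3+N+2\right)}+2\beta\sqrt{T\log N}+2. \] (b) The FSF with parameters \[ \alpha=\frac1T,\qquad \gamma=\frac{1}{2\beta T},\qquad \eta=\sqrt{\frac{S\log(NT)}{4\beta^2T\log\left(2\beta TN^3+N+2\right)}} \] satisfies, for every demand sequence $d_1,\dots,d_T\in\mathcal D$, \[ \mathbb E[\mathcal R_S(T)]\le 4\beta\sqrt{ST\log(NT)\log\left(2\beta TN^3+N+2\right)}+2\beta\sqrt{T\log N}+2. \]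
   Context: Fix integers $T\ge1$, $D\ge 1$ and reals $h,b>0$. Let $\mathcal T=\{1,\dots,T\}$, $\mathcal D=\{0,1,\dots,D\}$, let $\mathcal I\subseteq\mathcal D$ with $|\mathcal I|=N$, let $\beta=D\max\{h,b\}$, and let $c(i,d)=h(i-d)^+ + b(d-i)^+$. Logarithms are natural. For $d\in\mathcal D$, $e_d\in\mathbb R^{D+1}$ is the standard basis vector (coordinates indexed by $\{0,\dots,D\}$) with a $1$ in coordinate $d$. For $i\in\mathcal D$, the signal matrix $\mathbb S_i$ is the $(i+1)\times(D+1)$ $0/1$ matrix with rows indexed by $k\in\{1,\dots,i+1\}$ and columns by $d\in\{0,\dots,D\}$, with $\mathbb S_i(k,d)=1$ iff $\min\{i,d\}=k-1$; and $v_i\in\mathbb R^{i+1}$ is defined by $v_i(k)=hi-(h+b)(k-1)$, $k=1,\dots,i+1$. A demand sequence $d_1,\dots,d_T\in\mathcal D$ is fixed arbitrarily in advance. FSF policy with parameters $\eta>0$, $\gamma\in(0,1)$, $\alpha>0$: set $W_i(0)=1$ for all $i\in\mathcal I$. For $t=1,\dots,T$: let $W(t-1)=\sum_{i\in\mathcal I}W_i(t-1)$ and $p_i(t)=(1-\gamma)\frac{W_i(t-1)}{W(t-1)}+\frac{\gamma}{N}$; draw $I_t\in\mathcal I$ with $\mathbb P(I_t=i\mid I_1,\dots,I_{t-1})=p_i(t)$; observe $\min\{I_t,d_t\}$; for each $i\in\mathcal I$ compute $\tilde c(i,d_t)=\frac{\mathbb 1\{I_t\ge i\}}{\mathbb P_t(I_t\ge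 i)}\left(v_i^T\mathbb S_ie_{d_t}+\beta\right)$ with $\mathbb P_t(I_t\ge i)=\sum_{j\in\mathcal I,\,j\ge i}p_j(t)$; and set $W_i(t)=W_i(t-1)e^{-\eta\tilde c(i,d_t)}+\frac{\alpha}{N}\sum_{j\in\mathcal I}W_j(t-1)$. For a sequence $i_{[T]}=(i_1,\dots,i_T)\in\mathcal I^T$, its complexity is $C(i_{[T]})=\sum_{t=1}^{T}\mathbb 1\{i_t\ne i_{t+1}\}$ with the convention that the term for $t=T$ equals $1$ (so $C(i_{[T]})$ is the number of maximal blocks of consecutive periods on which $i_{[T]}$ is constant). Let $\mathcal I^T_S=\{i_{[T]}\in\mathcal I^T: C(i_{[T]})\le S\}$. The tracking regret is $\mathcal R_S(T)=\sum_{t\in\mathcal T}c(I_t,d_t)-\min_{i_{[T]}\in\mathcal I^T_S}\sum_{t\in\mathcal T}c(i_t,d_t)$; expectation is over the policy's randomization. *)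

theory Defs
  imports "HOL-Probability.Probability_Mass_Function"
begin

definition nv_cost :: "real \<Rightarrow> real \<Rightarrow> nat \<Rightarrow> nat \<Rightarrow> real" where
  "nv_cost h b i dd = h * max 0 (real i - real dd) + b * max 0 (real dd - real i)"

definition nv_beta :: "real \<Rightarrow> real \<Rightarrow> nat \<Rightarrow> real" where
  "nv_beta h b D = real D * max h b"

(* signal matrix S_i(k,d) = 1 iff min{i,d} = k-1, rows k = 1..i+1, columns d = 0..D *)
definition sig_mat :: "nat \<Rightarrow> nat \<Rightarrow> nat \<Rightarrow> real" where
  "sig_mat i k dd = (if min i dd = k - 1 then 1 else 0)"

definition sig_vec :: "real \<Rightarrow> real \<Rightarrow> nat \<Rightarrow> nat \<Rightarrow> real" where
  "sig_vec h b i k = h * real i - (h + b) * (real k - 1)"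

definition basis_vec :: "nat \<Rightarrow> nat \<Rightarrow> real" where
  "basis_vec d dd = (if dd = d then 1 else 0)"

(* v_i^T S_i e_d *)
definition sig_value :: "real \<Rightarrow> real \<Rightarrow> nat \<Rightarrow> nat \<Rightarrow> nat \<Rightarrow> real" where
  "sig_value h b D i d =
     (\<Sum>k = 1..i+1. sig_vec h b i k * (\<Sum>dd = 0..D. sig_mat i k dd * basis_vec d dd))"

(* p_i(t) computed from the weights W(t-1) *)
definition fsf_prob :: "nat set \<Rightarrow> real \<Rightarrow> (nat \<Rightarrow> real) \<Rightarrow> nat \<Rightarrow> real" where
  "fsf_prob I \<gamma> W i = (1 - \<gamma>) * W i / (\<Sum>j\<in>I. W j) + \<gamma> / real (card I)"

definition fsf_sample :: "nat set \<Rightarrow> real \<Rightarrow> (nat \<Rightarrow> real) \<Rightarrow> nat pmf" where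
  "fsf_sample I \<gamma> W = embed_pmf (\<lambda>i. if i \<in> I then fsf_prob I \<gamma> W i else 0)"

definition fsf_prob_ge :: "nat set \<Rightarrow> real \<Rightarrow> (nat \<Rightarrow> real) \<Rightarrow> nat \<Rightarrow> real" where
  "fsf_prob_ge I \<gamma> W i = (\<Sum>j\<in>{j\<in>I. j \<ge> i}. fsf_prob I \<gamma> W j)"

definition fsf_est :: "real \<Rightarrow> real \<Rightarrow> nat \<Rightarrow> nat set \<Rightarrow> real \<Rightarrow> (nat \<Rightarrow> real)
    \<Rightarrow> nat \<Rightarrow> nat \<Rightarrow> nat \<Rightarrow> real" where
  "fsf_est h b D I \<gamma> W It dt i =
     (if It \<ge> i then 1 else 0) / fsf_prob_ge I \<gamma> W i * (sig_value h b D i dt + nv_beta h b D)"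

definition fsf_update :: "real \<Rightarrow> real \<Rightarrow> nat \<Rightarrow> nat set \<Rightarrow> real \<Rightarrow> real \<Rightarrow> real
    \<Rightarrow> (nat \<Rightarrow> real) \<Rightarrow> nat \<Rightarrow> nat \<Rightarrow> (nat \<Rightarrow> real)" where
  "fsf_update h b D I \<eta> \<gamma> \<alpha> W It dt =
     (\<lambda>i. W i * exp (- \<eta> * fsf_est h b D I \<gamma> W It dt i)
          + \<alpha> / real (card I) * (\<Sum>j\<in>I. W j))"

(* joint law of the actions I_t, I_{t+1}, ..., I_{t+n-1}, given weights W(t-1) *)
primrec fsf_run :: "real \<Rightarrow> real \<Rightarrow> nat \<Rightarrow> nat set \<Rightarrow> (nat \<Rightarrow> nat) \<Rightarrow> real \<Rightarrow> real \<Rightarrow> real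
    \<Rightarrow> nat \<Rightarrow> (nat \<Rightarrow> real) \<Rightarrow> nat \<Rightarrow> nat list pmf" where
  "fsf_run h b D I d \<eta> \<gamma> \<alpha> t W 0 = return_pmf []"
| "fsf_run h b D I d \<eta> \<gamma> \<alpha> t W (Suc n) =
     bind_pmf (fsf_sample I \<gamma> W) (\<lambda>i.
       map_pmf (\<lambda>rest. i # rest)
         (fsf_run h b D I d \<eta> \<gamma> \<alpha> (Suc t) (fsf_update h b D I \<eta> \<gamma> \<alpha> W i (d t)) n))"

definition fsf_actions :: "real \<Rightarrow> real \<Rightarrow> nat \<Rightarrow> nat set \<Rightarrow> nat \<Rightarrow> (nat \<Rightarrow> nat)
    \<Rightarrow> real \<Rightarrow> real \<Rightarrow> real \<Rightarrow> nat list pmf" where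
  "fsf_actions h b D I T d \<eta> \<gamma> \<alpha> = fsf_run h b D I d \<eta> \<gamma> \<alpha> 1 (\<lambda>_. 1) T"

(* total cost of an action sequence (list index t-1 = period t) *)
definition total_cost :: "real \<Rightarrow> real \<Rightarrow> nat \<Rightarrow> (nat \<Rightarrow> nat) \<Rightarrow> nat list \<Rightarrow> real" where
  "total_cost h b T d is = (\<Sum>t = 1..T. nv_cost h b (is ! (t - 1)) (d t))"

definition seq_complexity :: "nat \<Rightarrow> nat list \<Rightarrow> nat" where
  "seq_complexity T is =
     (\<Sum>t = 1..T. if t = T then 1 else if is ! (t - 1) \<noteq> is ! t then 1 else 0)"

definition switching_set :: "nat set \<Rightarrow> nat \<Rightarrow> nat \<Rightarrow> nat list set" where
  "switching_set I T S = {is. length is = T \<and> set is \<subseteq> I \<and> seq_complexity T is \<le> S}"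

definition fsf_expected_regret :: "real \<Rightarrow> real \<Rightarrow> nat \<Rightarrow> nat set \<Rightarrow> nat \<Rightarrow> (nat \<Rightarrow> nat)
    \<Rightarrow> nat \<Rightarrow> real \<Rightarrow> real \<Rightarrow> real \<Rightarrow> real" where
  "fsf_expected_regret h b D I T d S \<eta> \<gamma> \<alpha> =
     measure_pmf.expectation (fsf_actions h b D I T d \<eta> \<gamma> \<alpha>) (total_cost h b T d)
     - (MIN is\<in>switching_set I T S. total_cost h b T d is)"

end

theory Submission
  imports Defs
begin

text \<open>Ordering \<open>i\<close> reveals the demand censored at \<open>i\<close>, hence the loss of every \<open>k \<le> i\<close>; so
  \<open>fsf_est\<close> is an unbiased estimate of the (shifted) loss of \<open>k\<close> with second moment
  \<open>loss\<^sup>2 / P(I\<^sub>t \<ge> k)\<close>. For the potential \<open>ln W(t) - ln W\<^sub>j(t)\<close> of a comparator action \<open>j\<close>, the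
  inequality \<open>e\<^sup>-\<^sup>x \<le> 1 - x + x\<^sup>2/2\<close> shows that its expected drop in one period is at least \<open>\<eta>\<close> times
  the instantaneous regret minus \<open>\<alpha> + 2\<beta>\<gamma>\<eta> + 4\<eta>\<^sup>2\<beta>\<^sup>2 ln (1 + N/\<gamma>)\<close>; the logarithm comes from
  a telescoping bound on \<open>\<Sum>\<^sub>k q\<^sub>k / P(I\<^sub>t \<ge> k)\<close>. Because every action keeps the share
  \<open>\<alpha>/N\<close> of the total weight, a switch of the comparator costs only \<open>ln (N/\<alpha>)\<close>. Summing over
  the horizon, \<open>\<eta> R \<le> ln N + T \<cdot> slack + (S - 1) ln (NT)\<close>, and the given \<open>\<eta>\<close> balances the two
  sides.\<close>

lemma exp_minus_le_quadratic:
  assumes "(x::real) \<ge> 0" shows "exp (- x) \<le> 1 - x + x\<^sup>2 / 2"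
proof -
  have exp_minus_ge_linear: "0 \<le> y - 1 + exp (- y)" if "y \<ge> 0" for y :: real
  proof -
    have "(\<lambda>y. y - 1 + exp (- y)) 0 \<le> (\<lambda>y. y - 1 + exp (- y)) y"
      by (rule DERIV_nonneg_imp_nondecreasing[OF that])
         (auto intro!: derivative_eq_intros exI[of _ "1 - exp (- _)"])
    then show ?thesis by simp
  qed
  have "(\<lambda>y. 1 - y + y\<^sup>2 / 2 - exp (- y)) 0 \<le> (\<lambda>y. 1 - y + y\<^sup>2 / 2 - exp (- y)) x"
    by (rule DERIV_nonneg_imp_nondecreasing[OF assms], rule exI[of _ "- 1 + _ + exp (- _)"])
       (use exp_minus_ge_linear in \<open>auto intro!: derivative_eq_intros simp: algebra_simps\<close>)
  then show ?thesis by simp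
qed

lemma ln_2_ge_half: "ln (2::real) \<ge> 1 / 2"
proof -
  have "ln (1 / 2 :: real) \<le> 1 / 2 - 1" by (rule ln_le_minus_one) simp
  then show ?thesis by (simp add: ln_div)
qed

text \<open>Each summand \<open>a\<^sub>k / y\<close> is at most \<open>ln (y / (y - a\<^sub>k))\<close>, and these logarithms telescope.\<close>

lemma sum_div_suffix_sum_le_ln:
  fixes a :: "'a::linorder \<Rightarrow> real"
  assumes "finite A" "\<And>k. k \<in> A \<Longrightarrow> a k \<ge> 0" "\<epsilon> > 0"
  shows "(\<Sum>k\<in>A. a k / (\<epsilon> + (\<Sum>j\<in>{j\<in>A. k \<le> j}. a j))) \<le> ln ((\<epsilon> + (\<Sum>k\<in>A. a k)) / \<epsilon>)"
  using assms
proof (induction A rule: finite_linorder_min_induct)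
  case empty
  then show ?case by simp
next
  case (insert c A)
  define z where "z = \<epsilon> + (\<Sum>k\<in>A. a k)"
  have c_notin: "c \<notin> A" using insert by auto
  have a_c: "a c \<ge> 0" using insert by auto
  have z_pos: "z > 0" using insert by (auto simp: z_def intro!: add_pos_nonneg sum_nonneg)
  have suffix_A: "{j \<in> insert c A. k \<le> j} = {j \<in> A. k \<le> j}" if "k \<in> A" for k
    using insert that by auto
  have suffix_c: "{j \<in> insert c A. c \<le> j} = insert c A" using insert by auto
  have "(\<Sum>k\<in>insert c A. a k / (\<epsilon> + (\<Sum>j\<in>{j\<in>insert c A. k \<le> j}. a j)))
      = a c / (z + a c) + (\<Sum>k\<in>A. a k / (\<epsilon> + (\<Sum>j\<in>{j\<in>A. k \<le> j}. a j)))"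
  proof -
    have "(\<Sum>k\<in>A. a k / (\<epsilon> + (\<Sum>j\<in>{j\<in>insert c A. k \<le> j}. a j)))
        = (\<Sum>k\<in>A. a k / (\<epsilon> + (\<Sum>j\<in>{j\<in>A. k \<le> j}. a j)))"
      by (rule sum.cong[OF refl]) (simp only: suffix_A)
    moreover have "(\<Sum>j\<in>{j\<in>insert c A. c \<le> j}. a j) = a c + (\<Sum>k\<in>A. a k)"
      unfolding suffix_c using insert.hyps c_notin by simp
    ultimately show ?thesis using insert.hyps c_notin by (simp add: z_def add_ac)
  qed
  also have "\<dots> \<le> ln ((z + a c) / z) + ln (z / \<epsilon>)"
  proof (rule add_mono)
    have "ln (z / (z + a c)) \<le> z / (z + a c) - 1" using z_pos a_c by (intro ln_le_minus_one) auto
    then show "a c / (z + a c) \<le> ln ((z + a c) / z)"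
      using z_pos a_c by (simp add: ln_div field_simps)
    show "(\<Sum>k\<in>A. a k / (\<epsilon> + (\<Sum>j\<in>{j\<in>A. k \<le> j}. a j))) \<le> ln (z / \<epsilon>)"
      using insert by (simp add: z_def)
  qed
  also have "\<dots> = ln ((z + a c) / \<epsilon>)"
    using z_pos a_c \<open>\<epsilon> > 0\<close> by (simp add: ln_div add_pos_nonneg)
  finally show ?case using insert.hyps c_notin by (simp add: z_def add.commute add.left_commute)
qed

lemma sig_value_eq:
  assumes "i \<le> D" "dd \<le> D"
  shows "sig_value h b D i dd = h * real i - (h + b) * real (min i dd)"
proof -
  have column: "(\<Sum>x = 0..D. sig_mat i k x * basis_vec dd x) = sig_mat i k dd" for k
  proof -
    have "(\<Sum>x = 0..D. sig_mat i k x * basis_vec dd x) = (\<Sum>x = 0..D. if x = dd then sig_mat i k dd else 0)"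
      by (rule sum.cong) (auto simp: basis_vec_def)
    then show ?thesis using assms by simp
  qed
  have "sig_value h b D i dd = (\<Sum>k = 1..i+1. if k = min i dd + 1 then sig_vec h b i k else 0)"
    unfolding sig_value_def column by (rule sum.cong) (auto simp: sig_mat_def)
  also have "\<dots> = sig_vec h b i (min i dd + 1)" by (simp add: sum.delta)
  finally show ?thesis by (simp add: sig_vec_def)
qed

fun switches :: "'a list \<Rightarrow> nat" where
  "switches (x # y # r) = (if x \<noteq> y then 1 else 0) + switches (y # r)"
| "switches _ = 0"

lemma switches_replicate: "switches (replicate n x) = 0"
proof -
  have "switches (x # replicate m x) = 0" for m by (induction m) simp_all
  then show ?thesis by (cases n) simp_all
qed

lemma seq_complexity_eq_Suc_switches:
  "xs \<noteq> [] \<Longrightarrow> seq_complexity (length xs) xs = Suc (switches xs)"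
proof (induction xs rule: switches.induct)
  case (1 x y r)
  define g where "g xs t = (if Suc t = length xs then 1 else if xs ! t \<noteq> xs ! Suc t then 1 else 0 :: nat)"
    for xs :: "nat list" and t
  have as_sum: "seq_complexity (length xs) xs = (\<Sum>t<length xs. g xs t)" for xs
    unfolding seq_complexity_def g_def One_nat_def sum.atLeast1_atMost_eq by (rule sum.cong) auto
  have "(\<Sum>t<length (x # y # r). g (x # y # r) t)
      = g (x # y # r) 0 + (\<Sum>t<length (y # r). g (x # y # r) (Suc t))"
    by (simp only: length_Cons sum.lessThan_Suc_shift)
  also have "(\<Sum>t<length (y # r). g (x # y # r) (Suc t)) = (\<Sum>t<length (y # r). g (y # r) t)"
    by (rule sum.cong) (auto simp: g_def)
  also have "g (x # y # r) 0 = (if x \<noteq> y then 1 else 0)" by (simp add: g_def)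
  finally have shift: "(\<Sum>t<length (x # y # r). g (x # y # r) t)
      = (if x \<noteq> y then 1 else 0) + (\<Sum>t<length (y # r). g (y # r) t)" .
  have "seq_complexity (length (y # r)) (y # r) = Suc (switches (y # r))" using 1 by simp
  then show ?case unfolding as_sum shift by (simp add: as_sum)
qed (simp_all add: seq_complexity_def)

locale fsf_setting =
  fixes h b :: real and D :: nat and I :: "nat set" and d :: "nat \<Rightarrow> nat" and \<eta> \<gamma> \<alpha> :: real
  assumes h_pos: "h > 0" and b_pos: "b > 0" and I_subset: "I \<subseteq> {0..D}" and card_I: "card I \<ge> 2"
    and demand_le: "\<And>t. d t \<le> D"
    and \<gamma>_pos: "\<gamma> > 0" and \<gamma>_less_1: "\<gamma> < 1" and \<alpha>_pos: "\<alpha> > 0" and \<alpha>_le_1: "\<alpha> \<le> 1"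
    and \<eta>_pos: "\<eta> > 0"
begin

abbreviation "\<beta> \<equiv> nv_beta h b D"
abbreviation "N \<equiv> real (card I)"
abbreviation "Wsum W \<equiv> \<Sum>j\<in>I. W j"
abbreviation "prob W i \<equiv> fsf_prob I \<gamma> W i"
abbreviation "prob_ge W k \<equiv> fsf_prob_ge I \<gamma> W k"
abbreviation "cost t i \<equiv> nv_cost h b i (d t)"
abbreviation "est W i t k \<equiv> fsf_est h b D I \<gamma> W i (d t) k"
abbreviation "upd W i t \<equiv> fsf_update h b D I \<eta> \<gamma> \<alpha> W i (d t)"
abbreviation "run t W n \<equiv> fsf_run h b D I d \<eta> \<gamma> \<alpha> t W n"

definition pos_weights :: "(nat \<Rightarrow> real) \<Rightarrow> bool" where
  "pos_weights W \<longleftrightarrow> (\<forall>i\<in>I. W i > 0)"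

definition normalized :: "(nat \<Rightarrow> real) \<Rightarrow> nat \<Rightarrow> real" where
  "normalized W k = W k / Wsum W"

text \<open>The quantity estimated by \<open>fsf_est\<close>. By \<open>loss_eq\<close> it differs from the cost by a term
  independent of the action, so it yields the same regret, and the shift by \<open>\<beta>\<close> makes it
  nonnegative.\<close>

definition loss :: "nat \<Rightarrow> nat \<Rightarrow> real" where
  "loss t k = sig_value h b D k (d t) + \<beta>"

definition potential :: "(nat \<Rightarrow> real) \<Rightarrow> nat \<Rightarrow> real" where
  "potential W j = ln (Wsum W) - ln (W j)"

lemma finite_I: "finite I"
  using I_subset finite_subset by blast

lemma N_ge_2: "N \<ge> 2"
  using card_I by simp

lemma in_I_le_D: "i \<in> I \<Longrightarrow> i \<le> D"
  using I_subset by auto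

lemma beta_pos: "\<beta> > 0"
proof -
  have "D \<ge> 1"
  proof (rule ccontr)
    assume "\<not> D \<ge> 1"
    then have "card I \<le> card {0::nat}" using I_subset by (intro card_mono) auto
    then show False using card_I by simp
  qed
  then show ?thesis using h_pos b_pos by (simp add: nv_beta_def)
qed

lemma scaled_D_le_beta: "h * real D \<le> \<beta>" "b * real D \<le> \<beta>"
  using mult_right_mono[of h "max h b" "real D"] mult_right_mono[of b "max h b" "real D"]
  by (simp_all add: nv_beta_def mult.commute)

lemma cost_nonneg: "0 \<le> cost t i"
  using h_pos b_pos by (simp add: nv_cost_def)

lemma cost_le_beta: assumes "i \<le> D" shows "cost t i \<le> \<beta>"
proof (cases "i \<le> d t")
  case True
  then have "cost t i = b * (real (d t) - real i)" by (simp add: nv_cost_def)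
  also have "\<dots> \<le> b * real D" using b_pos demand_le[of t] by (intro mult_left_mono) auto
  finally show ?thesis using scaled_D_le_beta by linarith
next
  case False
  then have "cost t i = h * (real i - real (d t))" by (simp add: nv_cost_def)
  also have "\<dots> \<le> h * real D" using h_pos assms by (intro mult_left_mono) auto
  finally show ?thesis using scaled_D_le_beta by linarith
qed

lemma loss_eq: assumes "i \<le> D" shows "loss t i = cost t i - b * real (d t) + \<beta>"
  using sig_value_eq[OF assms demand_le[of t], of h b]
  by (cases "i \<le> d t") (auto simp: loss_def nv_cost_def min_def algebra_simps)

lemma loss_nonneg: "i \<le> D \<Longrightarrow> 0 \<le> loss t i"
  and loss_le: "i \<le> D \<Longrightarrow> loss t i \<le> 2 * \<beta>"
proof -
  assume i: "i \<le> D"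
  have "0 \<le> b * real (d t)" "b * real (d t) \<le> b * real D"
    using b_pos demand_le[of t] by (auto intro: mult_left_mono)
  then show "0 \<le> loss t i" "loss t i \<le> 2 * \<beta>"
    using loss_eq[OF i, of t] cost_nonneg[of i t] cost_le_beta[OF i, of t] scaled_D_le_beta
    by linarith+
qed

subsection \<open>The sampling distribution\<close>

lemma Wsum_pos: "pos_weights W \<Longrightarrow> Wsum W > 0"
  using finite_I card_I by (intro sum_pos) (auto simp: pos_weights_def)

lemma prob_eq: "prob W k = (1 - \<gamma>) * normalized W k + \<gamma> / N"
  by (simp add: fsf_prob_def normalized_def)

lemma normalized_nonneg: "pos_weights W \<Longrightarrow> k \<in> I \<Longrightarrow> normalized W k \<ge> 0"
  using Wsum_pos by (auto simp: normalized_def pos_weights_def intro: less_imp_le)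

lemma sum_normalized: "pos_weights W \<Longrightarrow> (\<Sum>k\<in>I. normalized W k) = 1"
  using Wsum_pos[of W] by (simp add: normalized_def sum_divide_distrib[symmetric])

lemma prob_pos: assumes "pos_weights W" "i \<in> I" shows "prob W i > 0"
proof -
  have "(1 - \<gamma>) * normalized W i \<ge> 0" using assms \<gamma>_less_1 normalized_nonneg by simp
  moreover have "\<gamma> / N > 0" using \<gamma>_pos N_ge_2 by simp
  ultimately show ?thesis unfolding prob_eq by linarith
qed

lemma sum_prob: assumes "pos_weights W" shows "(\<Sum>i\<in>I. prob W i) = 1"
  using sum_normalized[OF assms] N_ge_2 by (simp add: prob_eq sum.distrib sum_distrib_left[symmetric])

lemma pmf_fsf_sample: assumes "pos_weights W"
  shows "pmf (fsf_sample I \<gamma> W) i = (if i \<in> I then prob W i else 0)"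
  unfolding fsf_sample_def
proof (rule pmf_embed_pmf)
  show "\<And>x. 0 \<le> (if x \<in> I then prob W x else 0)"
    using prob_pos[OF assms] by (auto intro: less_imp_le)
  have "(\<integral>\<^sup>+ x. ennreal (if x \<in> I then prob W x else 0) \<partial>count_space UNIV) = (\<Sum>x\<in>I. ennreal (prob W x))"
    by (subst nn_integral_count_space'[OF finite_I]) auto
  also have "\<dots> = ennreal (\<Sum>x\<in>I. prob W x)"
    using prob_pos[OF assms] by (intro sum_ennreal) (auto intro: less_imp_le)
  finally show "(\<integral>\<^sup>+ x. ennreal (if x \<in> I then prob W x else 0) \<partial>count_space UNIV) = 1"
    using sum_prob[OF assms] by simp
qed

lemma set_pmf_fsf_sample: assumes "pos_weights W" shows "set_pmf (fsf_sample I \<gamma> W) = I"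
proof -
  have "prob W i \<noteq> 0" if "i \<in> I" for i using prob_pos[OF assms that] by simp
  then show ?thesis by (auto simp: set_pmf_eq pmf_fsf_sample[OF assms] split: if_splits)
qed

lemma prob_le_prob_ge: assumes "pos_weights W" "k \<in> I" shows "prob W k \<le> prob_ge W k"
  unfolding fsf_prob_ge_def
  using assms finite_I prob_pos[OF assms(1)] by (intro member_le_sum) (auto intro: less_imp_le)

lemma prob_ge_pos: "pos_weights W \<Longrightarrow> k \<in> I \<Longrightarrow> prob_ge W k > 0"
  using prob_pos prob_le_prob_ge by fastforce

lemma prob_ge_eq_sum: "prob_ge W k = (\<Sum>i\<in>I. if k \<le> i then prob W i else 0)"
  unfolding fsf_prob_ge_def using finite_I by (simp add: sum.inter_filter)

lemma pos_weights_upd: assumes "pos_weights W" shows "pos_weights (upd W i t)"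
  unfolding pos_weights_def fsf_update_def
proof
  fix k assume "k \<in> I"
  then have "W k * exp (- \<eta> * est W i t k) > 0" using assms by (auto simp: pos_weights_def)
  moreover have "\<alpha> / N * Wsum W > 0" using \<alpha>_pos Wsum_pos[OF assms] card_I by simp
  ultimately show "W k * exp (- \<eta> * est W i t k) + \<alpha> / N * Wsum W > 0" by linarith
qed

lemma finite_set_pmf_run: "pos_weights W \<Longrightarrow> finite (set_pmf (run t W n))"
  by (induction n arbitrary: t W) (simp_all add: set_pmf_fsf_sample finite_I pos_weights_upd)

lemma set_pmf_run:
  "pos_weights W \<Longrightarrow> xs \<in> set_pmf (run t W n) \<Longrightarrow> length xs = n \<and> set xs \<subseteq> I"
proof (induction n arbitrary: t W xs)
  case 0 then show ?case by simp
next
  case (Suc n)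
  then obtain i r where xs: "xs = i # r" "i \<in> I" "r \<in> set_pmf (run (Suc t) (upd W i t) n)"
    by (auto simp: set_pmf_fsf_sample)
  then show ?case using Suc.IH[OF pos_weights_upd[OF Suc.prems(1)] xs(3)] by auto
qed

lemma expectation_run_Suc: assumes "pos_weights W"
  shows "measure_pmf.expectation (run t W (Suc n)) f
       = (\<Sum>i\<in>I. prob W i * measure_pmf.expectation (run (Suc t) (upd W i t) n) (\<lambda>r. f (i # r)))"
  by (simp only: fsf_run.simps, subst pmf_expectation_bind[of I])
     (auto simp: set_pmf_fsf_sample[OF assms] finite_I finite_set_pmf_run pos_weights_upd[OF assms]
                 pmf_fsf_sample[OF assms])

subsection \<open>The importance-weighted loss estimates\<close>

lemma est_eq: "est W i t k = (if k \<le> i then loss t k / prob_ge W k else 0)"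
  by (simp add: fsf_est_def loss_def)

lemma est_nonneg: assumes "pos_weights W" "k \<in> I" shows "est W i t k \<ge> 0"
  using loss_nonneg[OF in_I_le_D[OF assms(2)], of t] prob_ge_pos[OF assms] by (simp add: est_eq)

lemma sum_prob_est: assumes "pos_weights W" "k \<in> I"
  shows "(\<Sum>i\<in>I. prob W i * est W i t k) = loss t k"
proof -
  have "(\<Sum>i\<in>I. prob W i * est W i t k)
      = (\<Sum>i\<in>I. if k \<le> i then prob W i else 0) * (loss t k / prob_ge W k)"
    unfolding sum_distrib_right by (rule sum.cong) (auto simp: est_eq)
  then show ?thesis using prob_ge_pos[OF assms] by (simp add: prob_ge_eq_sum[symmetric])
qed

lemma sum_prob_est_sq: assumes "pos_weights W" "k \<in> I"
  shows "(\<Sum>i\<in>I. prob W i * (est W i t k)\<^sup>2) = (loss t k)\<^sup>2 / prob_ge W k"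
proof -
  have "(\<Sum>i\<in>I. prob W i * (est W i t k)\<^sup>2)
      = (\<Sum>i\<in>I. if k \<le> i then prob W i else 0) * (loss t k / prob_ge W k)\<^sup>2"
    unfolding sum_distrib_right by (rule sum.cong) (auto simp: est_eq)
  then show ?thesis using prob_ge_pos[OF assms] by (simp add: prob_ge_eq_sum[symmetric] power2_eq_square)
qed

lemma sum_prob_weighted_est: assumes "pos_weights W"
  shows "(\<Sum>i\<in>I. prob W i * (\<Sum>k\<in>I. f k * est W i t k)) = (\<Sum>k\<in>I. f k * loss t k)"
proof -
  have "(\<Sum>i\<in>I. prob W i * (\<Sum>k\<in>I. f k * est W i t k)) = (\<Sum>k\<in>I. f k * (\<Sum>i\<in>I. prob W i * est W i t k))"
    unfolding sum_distrib_left by (subst sum.swap) (simp add: mult.left_commute)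
  then show ?thesis using sum_prob_est[OF assms] by simp
qed

lemma sum_prob_weighted_est_sq: assumes "pos_weights W"
  shows "(\<Sum>i\<in>I. prob W i * (\<Sum>k\<in>I. f k * (est W i t k)\<^sup>2)) = (\<Sum>k\<in>I. f k * (loss t k)\<^sup>2 / prob_ge W k)"
proof -
  have "(\<Sum>i\<in>I. prob W i * (\<Sum>k\<in>I. f k * (est W i t k)\<^sup>2))
      = (\<Sum>k\<in>I. f k * (\<Sum>i\<in>I. prob W i * (est W i t k)\<^sup>2))"
    unfolding sum_distrib_left by (subst sum.swap) (simp add: mult.left_commute)
  then show ?thesis using sum_prob_est_sq[OF assms] by simp
qed

lemma prob_ge_lower: assumes "pos_weights W" "k \<in> I"
  shows "prob_ge W k \<ge> \<gamma> / N + (\<Sum>j\<in>{j\<in>I. k \<le> j}. (1 - \<gamma>) * normalized W j)"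
proof -
  have "card {j\<in>I. k \<le> j} \<ge> 1"
    using assms finite_I by (auto simp: Suc_le_eq card_gt_0_iff)
  then have "(\<Sum>j\<in>{j\<in>I. k \<le> j}. \<gamma> / N) \<ge> \<gamma> / N"
    using \<gamma>_pos mult_right_mono[of 1 "real (card {j\<in>I. k \<le> j})" "\<gamma> / N"] by simp
  then show ?thesis by (simp add: fsf_prob_ge_def prob_eq sum.distrib)
qed

lemma sum_prob_loss_le: assumes "pos_weights W"
  shows "(\<Sum>i\<in>I. prob W i * loss t i) \<le> (\<Sum>k\<in>I. normalized W k * loss t k) + 2 * \<beta> * \<gamma>"
proof -
  have "(\<Sum>i\<in>I. prob W i * loss t i)
      = (\<Sum>k\<in>I. (1 - \<gamma>) * (normalized W k * loss t k) + \<gamma> / N * loss t k)"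
    by (rule sum.cong) (auto simp: prob_eq algebra_simps)
  also have "\<dots> = (1 - \<gamma>) * (\<Sum>k\<in>I. normalized W k * loss t k) + \<gamma> / N * (\<Sum>k\<in>I. loss t k)"
    by (simp add: sum.distrib sum_distrib_left)
  moreover have "0 \<le> \<gamma> * (\<Sum>k\<in>I. normalized W k * loss t k)"
    using \<gamma>_pos normalized_nonneg[OF assms] loss_nonneg[OF in_I_le_D]
    by (intro mult_nonneg_nonneg sum_nonneg) auto
  moreover have "\<gamma> / N * (\<Sum>k\<in>I. loss t k) \<le> \<gamma> / N * (N * (2 * \<beta>))"
    using \<gamma>_pos loss_le[OF in_I_le_D] sum_mono[of I "loss t" "\<lambda>_. 2 * \<beta>"]
    by (intro mult_left_mono) auto
  ultimately show ?thesis using N_ge_2 by (simp add: algebra_simps)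
qed

lemma expected_cost_gap_eq: assumes "pos_weights W" "j \<in> I"
  shows "(\<Sum>i\<in>I. prob W i * cost t i) - cost t j = (\<Sum>i\<in>I. prob W i * loss t i) - loss t j"
proof -
  have "(\<Sum>i\<in>I. prob W i * loss t i)
      = (\<Sum>i\<in>I. prob W i * cost t i) + (\<Sum>i\<in>I. prob W i) * (\<beta> - b * real (d t))"
    by (simp add: loss_eq[OF in_I_le_D] algebra_simps sum.distrib sum_distrib_left sum_distrib_right
                  sum_subtractf)
  then show ?thesis using sum_prob[OF assms(1)] loss_eq[OF in_I_le_D[OF assms(2)]] by simp
qed

subsection \<open>Potential of the fixed-share weights\<close>

lemma W_le_Wsum: "pos_weights W \<Longrightarrow> j \<in> I \<Longrightarrow> W j \<le> Wsum W"
  using finite_I by (intro member_le_sum) (auto simp: pos_weights_def intro: less_imp_le)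

lemma potential_nonneg: assumes "pos_weights W" "j \<in> I" shows "potential W j \<ge> 0"
  using W_le_Wsum[OF assms] assms by (auto simp: potential_def pos_weights_def)

lemma upd_eq: "upd W i t k = W k * exp (- (\<eta> * est W i t k)) + \<alpha> / N * Wsum W"
  by (simp add: fsf_update_def)

lemma ln_Wsum_upd_le: assumes W: "pos_weights W"
  shows "ln (Wsum (upd W i t)) \<le> ln (Wsum W) + \<alpha> - \<eta> * (\<Sum>k\<in>I. normalized W k * est W i t k)
           + \<eta>\<^sup>2 / 2 * (\<Sum>k\<in>I. normalized W k * (est W i t k)\<^sup>2)"
proof -
  define m1 where "m1 = (\<Sum>k\<in>I. normalized W k * est W i t k)"
  define m2 where "m2 = (\<Sum>k\<in>I. normalized W k * (est W i t k)\<^sup>2)"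
  define Z where "Z = 1 + \<alpha> - \<eta> * m1 + \<eta>\<^sup>2 / 2 * m2"
  define x where "x k = \<eta> * est W i t k" for k
  have x_nonneg: "x k \<ge> 0" if "k \<in> I" for k using est_nonneg[OF W that] \<eta>_pos by (simp add: x_def)
  have total_pos: "Wsum W > 0" using Wsum_pos[OF W] .
  have "Wsum (upd W i t) = (\<Sum>k\<in>I. W k * exp (- x k)) + \<alpha> * Wsum W"
    using N_ge_2 by (simp add: upd_eq sum.distrib x_def)
  also have "\<dots> \<le> (\<Sum>k\<in>I. W k * (1 - x k + (x k)\<^sup>2 / 2)) + \<alpha> * Wsum W"
    using W x_nonneg
    by (intro add_right_mono sum_mono mult_left_mono exp_minus_le_quadratic)
       (auto simp: pos_weights_def intro: less_imp_le)
  also have "(\<Sum>k\<in>I. W k * (1 - x k + (x k)\<^sup>2 / 2))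
      = Wsum W - \<eta> * (\<Sum>k\<in>I. W k * est W i t k) + \<eta>\<^sup>2 / 2 * (\<Sum>k\<in>I. W k * (est W i t k)\<^sup>2)"
    by (simp add: x_def algebra_simps sum.distrib sum_subtractf sum_distrib_left power2_eq_square
                  sum_divide_distrib)
  also have "(\<Sum>k\<in>I. W k * est W i t k) = Wsum W * m1"
    using total_pos by (simp add: m1_def normalized_def sum_distrib_left)
  also have "(\<Sum>k\<in>I. W k * (est W i t k)\<^sup>2) = Wsum W * m2"
    using total_pos by (simp add: m2_def normalized_def sum_distrib_left)
  also have "Wsum W - \<eta> * (Wsum W * m1) + \<eta>\<^sup>2 / 2 * (Wsum W * m2) + \<alpha> * Wsum W = Wsum W * Z"
    by (simp add: Z_def algebra_simps)
  finally have upper: "Wsum (upd W i t) \<le> Wsum W * Z" .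
  have upd_pos: "Wsum (upd W i t) > 0" using Wsum_pos[OF pos_weights_upd[OF W]] .
  then have "0 < Wsum W * Z" using upper by linarith
  then have Z_pos: "Z > 0" using total_pos by (simp add: zero_less_mult_iff)
  have "ln (Wsum (upd W i t)) \<le> ln (Wsum W * Z)" using upper upd_pos by simp
  also have "\<dots> = ln (Wsum W) + ln Z" using total_pos Z_pos by (simp add: ln_mult)
  also have "ln Z \<le> Z - 1" using Z_pos by (rule ln_le_minus_one)
  finally show ?thesis by (simp add: Z_def m1_def m2_def)
qed

lemma ln_upd_ge: assumes W: "pos_weights W" and "j \<in> I" "j' \<in> I"
  shows "ln (upd W i t j') \<ge> ln (W j) - \<eta> * est W i t j - (if j \<noteq> j' then ln (N / \<alpha>) else 0)"
proof (cases "j = j'")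
  case True
  have "W j * exp (- (\<eta> * est W i t j)) > 0" using W \<open>j \<in> I\<close> by (simp add: pos_weights_def)
  moreover have "W j * exp (- (\<eta> * est W i t j)) \<le> upd W i t j"
    using \<alpha>_pos Wsum_pos[OF W] by (simp add: upd_eq)
  ultimately have "ln (W j * exp (- (\<eta> * est W i t j))) \<le> ln (upd W i t j)" by simp
  moreover have "W j > 0" using W \<open>j \<in> I\<close> by (simp add: pos_weights_def)
  ultimately show ?thesis using True by (simp add: ln_mult)
next
  case False
  have Wj: "W j > 0" using W \<open>j \<in> I\<close> by (simp add: pos_weights_def)
  have "\<alpha> / N * W j \<le> \<alpha> / N * Wsum W"
    using W_le_Wsum[OF W \<open>j \<in> I\<close>] \<alpha>_pos by (intro mult_left_mono) auto
  also have "\<dots> \<le> upd W i t j'"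
    using W \<open>j' \<in> I\<close> by (simp add: upd_eq pos_weights_def less_imp_le)
  finally have "ln (\<alpha> / N * W j) \<le> ln (upd W i t j')" using Wj \<alpha>_pos N_ge_2 by (intro ln_mono) auto
  moreover have "ln (\<alpha> / N * W j) = ln (W j) - ln (N / \<alpha>)"
    using Wj \<alpha>_pos N_ge_2 by (simp add: ln_mult ln_div)
  moreover have "\<eta> * est W i t j \<ge> 0" using est_nonneg[OF W \<open>j \<in> I\<close>] \<eta>_pos by simp
  ultimately show ?thesis using False by simp
qed

lemma potential_upd_le: assumes "pos_weights W" "j \<in> I" "j' \<in> I"
  shows "potential (upd W i t) j' \<le> potential W j + \<alpha> + (if j \<noteq> j' then ln (N / \<alpha>) else 0)
          - \<eta> * (\<Sum>k\<in>I. normalized W k * est W i t k)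
          + \<eta>\<^sup>2 / 2 * (\<Sum>k\<in>I. normalized W k * (est W i t k)\<^sup>2) + \<eta> * est W i t j"
  using ln_Wsum_upd_le[OF assms(1), of i t] ln_upd_ge[OF assms, of i t]
  by (simp add: potential_def)


subsection \<open>Regret against a comparator sequence\<close>

fun cost_from :: "nat \<Rightarrow> nat list \<Rightarrow> real" where
  "cost_from t [] = 0"
| "cost_from t (i # r) = cost t i + cost_from (Suc t) r"

lemma cost_from_nonneg: "0 \<le> cost_from t xs"
  by (induction xs arbitrary: t) (simp_all add: cost_nonneg add_nonneg_nonneg)

lemma cost_from_le: "set xs \<subseteq> I \<Longrightarrow> cost_from t xs \<le> \<beta> * real (length xs)"
  by (induction xs arbitrary: t) (auto simp: algebra_simps intro: add_mono cost_le_beta in_I_le_D)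

lemma cost_from_eq_sum: "cost_from t xs = (\<Sum>s<length xs. cost (t + s) (xs ! s))"
  by (induction xs arbitrary: t) (simp_all only: length_Cons sum.lessThan_Suc_shift, simp_all)

lemma total_cost_eq_cost_from: "length xs = T \<Longrightarrow> total_cost h b T d xs = cost_from 1 xs"
  unfolding total_cost_def One_nat_def sum.atLeast1_atMost_eq cost_from_eq_sum by simp

lemma pos_weights_const_1: "pos_weights (\<lambda>_. 1)"
  by (simp add: pos_weights_def)

lemma expectation_fsf_actions:
  "measure_pmf.expectation (fsf_actions h b D I T d \<eta> \<gamma> \<alpha>) (total_cost h b T d)
     = measure_pmf.expectation (run 1 (\<lambda>_. 1) T) (cost_from 1)"
  unfolding fsf_actions_def
  by (intro integral_cong_AE AE_pmfI) (auto simp: total_cost_eq_cost_from set_pmf_run[OF pos_weights_const_1])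

lemma expectation_run_cost_from: assumes "pos_weights W"
  shows "measure_pmf.expectation (run t W (Suc n)) (cost_from t)
     = (\<Sum>i\<in>I. prob W i * (cost t i + measure_pmf.expectation (run (Suc t) (upd W i t) n) (cost_from (Suc t))))"
  unfolding expectation_run_Suc[OF assms]
  by (rule sum.cong[OF refl])
     (simp add: integrable_measure_pmf_finite finite_set_pmf_run pos_weights_upd[OF assms])

lemma switching_set_finite: "finite (switching_set I T S)"
proof (rule finite_subset)
  show "switching_set I T S \<subseteq> {xs. set xs \<subseteq> I \<and> length xs = T}" by (auto simp: switching_set_def)
  show "finite {xs. set xs \<subseteq> I \<and> length xs = T}" using finite_I by (rule finite_lists_length_eq)
qed

lemma switching_set_nonempty: assumes "T \<ge> 1" "S \<ge> 1" shows "switching_set I T S \<noteq> {}"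
proof -
  obtain i where "i \<in> I" using card_I by (metis all_not_in_conv card.empty not_numeral_le_zero)
  moreover have "seq_complexity T (replicate T i) = 1"
    using seq_complexity_eq_Suc_switches[of "replicate T i"] assms by (simp add: switches_replicate)
  ultimately have "replicate T i \<in> switching_set I T S" using assms by (auto simp: switching_set_def)
  then show ?thesis by auto
qed

lemma expected_regret_eq_comparator: assumes "T \<ge> 1" "S \<ge> 1"
  obtains c where "c \<in> switching_set I T S"
    and "fsf_expected_regret h b D I T d S \<eta> \<gamma> \<alpha>
      = measure_pmf.expectation (run 1 (\<lambda>_. 1) T) (cost_from 1) - cost_from 1 c"
proof -
  have "Min (total_cost h b T d ` switching_set I T S) \<in> total_cost h b T d ` switching_set I T S"
    using switching_set_finite switching_set_nonempty[OF assms] by (intro Min_in) auto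
  then obtain c where c: "c \<in> switching_set I T S"
    and "Min (total_cost h b T d ` switching_set I T S) = total_cost h b T d c" by auto
  moreover have "length c = T" using c by (simp add: switching_set_def)
  ultimately show ?thesis
    by (intro that[OF c]) (simp add: fsf_expected_regret_def expectation_fsf_actions total_cost_eq_cost_from)
qed

lemma expected_regret_le_trivial: assumes "T \<ge> 1" "S \<ge> 1"
  shows "fsf_expected_regret h b D I T d S \<eta> \<gamma> \<alpha> \<le> \<beta> * real T"
proof -
  obtain c where "c \<in> switching_set I T S"
    and regret: "fsf_expected_regret h b D I T d S \<eta> \<gamma> \<alpha>
      = measure_pmf.expectation (run 1 (\<lambda>_. 1) T) (cost_from 1) - cost_from 1 c"
    using expected_regret_eq_comparator[OF assms] .
  have "measure_pmf.expectation (run 1 (\<lambda>_. 1) T) (cost_from 1)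
      \<le> measure_pmf.expectation (run 1 (\<lambda>_. 1) T) (\<lambda>_. \<beta> * real T)"
    by (intro integral_mono_AE AE_pmfI)
       (auto simp: integrable_measure_pmf_finite finite_set_pmf_run[OF pos_weights_const_1]
             dest!: set_pmf_run[OF pos_weights_const_1] intro!: cost_from_le[simplified])
  then show ?thesis using regret cost_from_nonneg[of 1 c] by simp
qed

definition step_slack :: real where
  "step_slack = \<alpha> + 2 * \<beta> * \<gamma> * \<eta> + 4 * \<eta>\<^sup>2 * \<beta>\<^sup>2 * ln (1 + N / \<gamma>)"

context
  assumes \<gamma>_le_half: "\<gamma> \<le> 1 / 2"
begin

lemma sum_normalized_div_prob_ge_le: assumes W: "pos_weights W"
  shows "(\<Sum>k\<in>I. normalized W k / prob_ge W k) \<le> 2 * ln (1 + N / \<gamma>)"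
proof -
  define a where "a j = (1 - \<gamma>) * normalized W j" for j
  define \<epsilon> where "\<epsilon> = \<gamma> / N"
  have \<epsilon>_pos: "\<epsilon> > 0" using \<gamma>_pos N_ge_2 by (simp add: \<epsilon>_def)
  have a_nonneg: "a k \<ge> 0" if "k \<in> I" for k
    using normalized_nonneg[OF W that] \<gamma>_less_1 by (simp add: a_def)
  have "normalized W k / prob_ge W k \<le> a k / (\<epsilon> + (\<Sum>j\<in>{j\<in>I. k \<le> j}. a j)) / (1 - \<gamma>)"
    if k: "k \<in> I" for k
  proof -
    have "\<epsilon> + (\<Sum>j\<in>{j\<in>I. k \<le> j}. a j) > 0" using \<epsilon>_pos a_nonneg by (intro add_pos_nonneg sum_nonneg) auto
    then have "normalized W k / prob_ge W k \<le> normalized W k / (\<epsilon> + (\<Sum>j\<in>{j\<in>I. k \<le> j}. a j))"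
      using prob_ge_lower[OF W k] normalized_nonneg[OF W k]
      by (intro divide_left_mono) (auto simp: a_def \<epsilon>_def sum_distrib_left)
    then show ?thesis using \<gamma>_less_1 by (simp add: a_def)
  qed
  then have "(\<Sum>k\<in>I. normalized W k / prob_ge W k)
      \<le> (\<Sum>k\<in>I. a k / (\<epsilon> + (\<Sum>j\<in>{j\<in>I. k \<le> j}. a j))) / (1 - \<gamma>)"
    by (simp add: sum_mono sum_divide_distrib)
  also have "\<dots> \<le> ln ((\<epsilon> + (\<Sum>k\<in>I. a k)) / \<epsilon>) / (1 - \<gamma>)"
    using \<gamma>_less_1 by (intro divide_right_mono sum_div_suffix_sum_le_ln finite_I a_nonneg \<epsilon>_pos) auto
  also have "(\<Sum>k\<in>I. a k) = 1 - \<gamma>"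
    using sum_normalized[OF W] by (simp add: a_def sum_distrib_left[symmetric])
  also have "ln ((\<epsilon> + (1 - \<gamma>)) / \<epsilon>) \<le> ln (1 + N / \<gamma>)"
  proof -
    have "(\<epsilon> + (1 - \<gamma>)) / \<epsilon> = 1 + N * (1 - \<gamma>) / \<gamma>"
      using \<gamma>_pos N_ge_2 by (simp add: \<epsilon>_def field_simps)
    also have "\<dots> \<le> 1 + N / \<gamma>" using \<gamma>_pos \<gamma>_less_1 N_ge_2 by (simp add: divide_right_mono)
    finally show ?thesis using \<epsilon>_pos \<gamma>_less_1 by (intro ln_mono) auto
  qed
  then have "ln ((\<epsilon> + (1 - \<gamma>)) / \<epsilon>) / (1 - \<gamma>) \<le> ln (1 + N / \<gamma>) / (1 - \<gamma>)"
    using \<gamma>_less_1 by (intro divide_right_mono) auto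
  also have "\<dots> \<le> 2 * ln (1 + N / \<gamma>)"
    using \<gamma>_pos \<gamma>_le_half N_ge_2 by (simp add: field_simps)
  finally show ?thesis .
qed

lemma variance_term_le: assumes W: "pos_weights W"
  shows "(\<Sum>k\<in>I. normalized W k * (loss t k)\<^sup>2 / prob_ge W k) \<le> 8 * \<beta>\<^sup>2 * ln (1 + N / \<gamma>)"
proof -
  have "(\<Sum>k\<in>I. normalized W k * (loss t k)\<^sup>2 / prob_ge W k) \<le> (\<Sum>k\<in>I. (2 * \<beta>)\<^sup>2 * (normalized W k / prob_ge W k))"
  proof (rule sum_mono)
    fix k assume k: "k \<in> I"
    have "(loss t k)\<^sup>2 \<le> (2 * \<beta>)\<^sup>2"
      using loss_nonneg[OF in_I_le_D[OF k]] loss_le[OF in_I_le_D[OF k]] by (intro power_mono) auto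
    moreover have "normalized W k / prob_ge W k \<ge> 0"
      using normalized_nonneg[OF W k] prob_ge_pos[OF W k] by simp
    ultimately show "normalized W k * (loss t k)\<^sup>2 / prob_ge W k \<le> (2 * \<beta>)\<^sup>2 * (normalized W k / prob_ge W k)"
      using mult_right_mono by (fastforce simp: field_simps)
  qed
  also have "\<dots> \<le> (2 * \<beta>)\<^sup>2 * (2 * ln (1 + N / \<gamma>))"
    by (simp only: sum_distrib_left[symmetric]) (intro mult_left_mono sum_normalized_div_prob_ge_le W; simp)
  finally show ?thesis by (simp add: power_mult_distrib)
qed

text \<open>Averaging \<open>potential_upd_le\<close> over the drawn action replaces the estimates by the losses.\<close>

lemma expected_potential_step:
  assumes W: "pos_weights W" and j: "j \<in> I" and j': "j' \<in> I"
  shows "\<eta> * ((\<Sum>i\<in>I. prob W i * cost t i) - cost t j)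
     \<le> potential W j - (\<Sum>i\<in>I. prob W i * potential (upd W i t) j') + step_slack
        + (if j \<noteq> j' then ln (N / \<alpha>) else 0)"
proof -
  define C where "C = potential W j + \<alpha> + (if j \<noteq> j' then ln (N / \<alpha>) else 0)"
  define M where "M = (\<Sum>k\<in>I. normalized W k * loss t k)"
  define V where "V = (\<Sum>k\<in>I. normalized W k * (loss t k)\<^sup>2 / prob_ge W k)"
  have "(\<Sum>i\<in>I. prob W i * potential (upd W i t) j')
      \<le> (\<Sum>i\<in>I. prob W i * (C - \<eta> * (\<Sum>k\<in>I. normalized W k * est W i t k)
            + \<eta>\<^sup>2 / 2 * (\<Sum>k\<in>I. normalized W k * (est W i t k)\<^sup>2) + \<eta> * est W i t j))"
    using potential_upd_le[OF W j j'] prob_pos[OF W]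
    by (intro sum_mono mult_left_mono) (auto simp: C_def less_imp_le)
  also have "\<dots> = C * (\<Sum>i\<in>I. prob W i)
      - \<eta> * (\<Sum>i\<in>I. prob W i * (\<Sum>k\<in>I. normalized W k * est W i t k))
      + \<eta>\<^sup>2 / 2 * (\<Sum>i\<in>I. prob W i * (\<Sum>k\<in>I. normalized W k * (est W i t k)\<^sup>2))
      + \<eta> * (\<Sum>i\<in>I. prob W i * est W i t j)"
    by (simp add: algebra_simps sum.distrib sum_subtractf sum_distrib_left)
  also have "\<dots> = C - \<eta> * M + \<eta>\<^sup>2 / 2 * V + \<eta> * loss t j"
    by (simp add: sum_prob[OF W] sum_prob_weighted_est[OF W] sum_prob_weighted_est_sq[OF W]
                  sum_prob_est[OF W j] M_def V_def)
  finally have avg: "(\<Sum>i\<in>I. prob W i * potential (upd W i t) j') \<le> C - \<eta> * M + \<eta>\<^sup>2 / 2 * V + \<eta> * loss t j" .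
  have "\<eta>\<^sup>2 / 2 * V \<le> \<eta>\<^sup>2 / 2 * (8 * \<beta>\<^sup>2 * ln (1 + N / \<gamma>))"
    unfolding V_def by (intro mult_left_mono variance_term_le W) simp
  moreover have "\<eta> * ((\<Sum>i\<in>I. prob W i * cost t i) - cost t j) \<le> \<eta> * (M + 2 * \<beta> * \<gamma> - loss t j)"
    using expected_cost_gap_eq[OF W j] sum_prob_loss_le[OF W] \<eta>_pos by (simp add: M_def)
  ultimately show ?thesis using avg by (simp add: step_slack_def C_def algebra_simps)
qed


lemma regret_run_Suc_eq: assumes W: "pos_weights W"
  shows "\<eta> * (measure_pmf.expectation (run t W (Suc n)) (cost_from t) - (cost t j + R))
    = \<eta> * ((\<Sum>i\<in>I. prob W i * cost t i) - cost t j)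
      + (\<Sum>i\<in>I. prob W i * (\<eta> * (measure_pmf.expectation (run (Suc t) (upd W i t) n) (cost_from (Suc t)) - R)))"
  unfolding expectation_run_cost_from[OF W] using sum_prob[OF W]
  by (simp add: algebra_simps sum.distrib sum_subtractf sum_distrib_left[symmetric])

lemma expected_regret_potential_bound:
  "pos_weights W \<Longrightarrow> j \<in> I \<Longrightarrow> set js \<subseteq> I \<Longrightarrow>
   \<eta> * (measure_pmf.expectation (run t W (Suc (length js))) (cost_from t) - cost_from t (j # js))
     \<le> potential W j + real (Suc (length js)) * step_slack + real (switches (j # js)) * ln (N / \<alpha>)"
proof (induction js arbitrary: j t W)
  case Nil
  have "(\<Sum>i\<in>I. prob W i * potential (upd W i t) j) \<ge> 0"
    using prob_pos[OF Nil(1)] potential_nonneg[OF pos_weights_upd[OF Nil(1)] Nil(2)]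
    by (intro sum_nonneg) (simp add: less_imp_le)
  moreover have "measure_pmf.expectation (run t W (Suc 0)) (cost_from t) = (\<Sum>i\<in>I. prob W i * cost t i)"
    unfolding expectation_run_cost_from[OF Nil(1)] by simp
  ultimately show ?case using expected_potential_step[OF Nil(1) Nil(2) Nil(2), of t] by simp
next
  case (Cons j' js)
  note W = Cons.prems(1) and j = Cons.prems(2)
  have j': "j' \<in> I" and js: "set js \<subseteq> I" using Cons.prems(3) by auto
  define R where "R = cost_from (Suc t) (j' # js)"
  define E where "E i = measure_pmf.expectation (run (Suc t) (upd W i t) (Suc (length js))) (cost_from (Suc t))"
    for i
  define M where "M = real (Suc (length js)) * step_slack + real (switches (j' # js)) * ln (N / \<alpha>)"
  have "\<eta> * (E i - R) \<le> potential (upd W i t) j' + M" for i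
    using Cons.IH[OF pos_weights_upd[OF W] j' js] unfolding E_def R_def M_def by (simp only: add.assoc)
  then have IH: "prob W i * (\<eta> * (E i - R)) \<le> prob W i * (potential (upd W i t) j' + M)"
    if "i \<in> I" for i
    using prob_pos[OF W that] by (intro mult_left_mono) auto
  have "\<eta> * (measure_pmf.expectation (run t W (Suc (length (j' # js)))) (cost_from t) - cost_from t (j # j' # js))
      = \<eta> * ((\<Sum>i\<in>I. prob W i * cost t i) - cost t j) + (\<Sum>i\<in>I. prob W i * (\<eta> * (E i - R)))"
    using regret_run_Suc_eq[OF W, of t "length (j' # js)" j R] by (simp only: E_def R_def length_Cons cost_from.simps)
  also have "\<dots> \<le> potential W j - (\<Sum>i\<in>I. prob W i * potential (upd W i t) j') + step_slack
        + (if j \<noteq> j' then ln (N / \<alpha>) else 0) + (\<Sum>i\<in>I. prob W i * (potential (upd W i t) j' + M))"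
  proof -
    have "(\<Sum>i\<in>I. prob W i * (\<eta> * (E i - R))) \<le> (\<Sum>i\<in>I. prob W i * (potential (upd W i t) j' + M))"
      using IH by (rule sum_mono)
    then show ?thesis using expected_potential_step[OF W j j', of t] by linarith
  qed
  also have "\<dots> = potential W j + real (Suc (length (j' # js))) * step_slack
        + real (switches (j # j' # js)) * ln (N / \<alpha>)"
  proof -
    have "(\<Sum>i\<in>I. prob W i * (potential (upd W i t) j' + M))
        = (\<Sum>i\<in>I. prob W i * potential (upd W i t) j') + M"
      using sum_prob[OF W] by (simp add: distrib_left sum.distrib sum_distrib_right[symmetric])
    then show ?thesis by (simp add: M_def algebra_simps)
  qed
  finally show ?case .
qed

lemma expected_regret_le: assumes "T \<ge> 1" "S \<ge> 1"
  shows "fsf_expected_regret h b D I T d S \<eta> \<gamma> \<alpha>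
    \<le> (ln N + real T * step_slack + (real S - 1) * ln (N / \<alpha>)) / \<eta>"
proof -
  obtain c where c: "c \<in> switching_set I T S"
    and regret: "fsf_expected_regret h b D I T d S \<eta> \<gamma> \<alpha>
      = measure_pmf.expectation (run 1 (\<lambda>_. 1) T) (cost_from 1) - cost_from 1 c"
    using expected_regret_eq_comparator[OF assms] .
  then obtain j js where c_eq: "c = j # js" and "j \<in> I" "set js \<subseteq> I" "Suc (length js) = T"
    and switches: "real (switches c) \<le> real S - 1"
    using assms seq_complexity_eq_Suc_switches[of c]
    by (cases c) (auto simp: switching_set_def)
  have "\<eta> * fsf_expected_regret h b D I T d S \<eta> \<gamma> \<alpha>
      \<le> potential (\<lambda>_. 1) j + real T * step_slack + real (switches c) * ln (N / \<alpha>)"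
    using expected_regret_potential_bound[OF pos_weights_const_1 \<open>j \<in> I\<close> \<open>set js \<subseteq> I\<close>, of 1]
    by (simp add: regret c_eq \<open>Suc (length js) = T\<close>)
  also have "\<dots> \<le> ln N + real T * step_slack + (real S - 1) * ln (N / \<alpha>)"
    using switches N_ge_2 \<alpha>_pos \<alpha>_le_1
    by (simp add: potential_def mult_right_mono le_divide_eq)
  finally show ?thesis using \<eta>_pos by (simp add: pos_le_divide_eq mult.commute)
qed

end

end

subsection \<open>Tuning the parameters\<close>

lemma fsf_run_cong:
  "(\<And>s. t \<le> s \<Longrightarrow> s < t + n \<Longrightarrow> d s = d' s) \<Longrightarrow>
   fsf_run h b D I d \<eta> \<gamma> \<alpha> t W n = fsf_run h b D I d' \<eta> \<gamma> \<alpha> t W n"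
proof (induction n arbitrary: t W)
  case 0 then show ?case by simp
next
  case (Suc n)
  have "fsf_run h b D I d \<eta> \<gamma> \<alpha> (Suc t) W' n = fsf_run h b D I d' \<eta> \<gamma> \<alpha> (Suc t) W' n" for W'
    using Suc by (intro Suc.IH) auto
  moreover have "d t = d' t" using Suc.prems by simp
  ultimately show ?case by simp
qed

lemma fsf_expected_regret_cong: assumes "\<forall>t\<in>{1..T}. d t = d' t"
  shows "fsf_expected_regret h b D I T d S \<eta> \<gamma> \<alpha> = fsf_expected_regret h b D I T d' S \<eta> \<gamma> \<alpha>"
proof -
  have "fsf_actions h b D I T d \<eta> \<gamma> \<alpha> = fsf_actions h b D I T d' \<eta> \<gamma> \<alpha>"
    unfolding fsf_actions_def by (rule fsf_run_cong) (use assms in auto)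
  moreover have "total_cost h b T d = total_cost h b T d'"
    using assms by (auto simp: total_cost_def fun_eq_iff intro!: sum.cong)
  ultimately show ?thesis by (simp add: fsf_expected_regret_def)
qed

text \<open>The demands after the horizon are irrelevant, so they can be set to \<open>0\<close> to meet the
  standing assumption \<open>d t \<le> D\<close> of \<open>fsf_setting\<close>.\<close>

lemma fsf_regret_with_horizon_tuning:
  fixes h b :: real and D T S :: nat and I :: "nat set" and d :: "nat \<Rightarrow> nat"
  assumes "T \<ge> 1" "h > 0" "b > 0" "I \<subseteq> {0..D}" "card I \<ge> 2"
    and \<beta>T: "2 * nv_beta h b D * real T > 1" and "S \<ge> 1" and "\<forall>t\<in>{1..T}. d t \<in> {0..D}"
    and "\<eta> > 0"
  shows "fsf_expected_regret h b D I T d S \<eta> (1 / (2 * nv_beta h b D * real T)) (1 / real T)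
      \<le> nv_beta h b D * real T"
    and "nv_beta h b D * real T \<ge> 1 \<Longrightarrow>
      fsf_expected_regret h b D I T d S \<eta> (1 / (2 * nv_beta h b D * real T)) (1 / real T)
      \<le> (ln (real (card I)) + 1 + (real S - 1) * ln (real (card I) * real T)) / \<eta> + 1
         + 4 * \<eta> * (nv_beta h b D)\<^sup>2 * real T * ln (1 + 2 * nv_beta h b D * real T * real (card I))"
proof -
  define d' where "d' t = (if t \<in> {1..T} then d t else 0)" for t
  have \<beta>T_pos: "nv_beta h b D * real T > 0" using \<beta>T by simp
  interpret fsf_setting h b D I d' \<eta> "1 / (2 * nv_beta h b D * real T)" "1 / real T"
    using assms \<beta>T_pos by unfold_locales (auto simp: d'_def mult.commute)
  have regret_eq: "fsf_expected_regret h b D I T d S \<eta> (1 / (2 * \<beta> * real T)) (1 / real T)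
      = fsf_expected_regret h b D I T d' S \<eta> (1 / (2 * \<beta> * real T)) (1 / real T)"
    by (rule fsf_expected_regret_cong) (simp add: d'_def)
  show "fsf_expected_regret h b D I T d S \<eta> (1 / (2 * \<beta> * real T)) (1 / real T) \<le> \<beta> * real T"
    unfolding regret_eq by (rule expected_regret_le_trivial) (use assms in auto)
  assume "\<beta> * real T \<ge> 1"
  then have "1 / (2 * \<beta> * real T) \<le> 1 / 2" by (simp add: field_simps)
  moreover have "real T * step_slack = 1 + \<eta> + 4 * \<eta>\<^sup>2 * \<beta>\<^sup>2 * real T * ln (1 + 2 * \<beta> * real T * N)"
    unfolding step_slack_def using beta_pos assms(1) by (simp add: field_simps)
  ultimately show "fsf_expected_regret h b D I T d S \<eta> (1 / (2 * \<beta> * real T)) (1 / real T)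
      \<le> (ln N + 1 + (real S - 1) * ln (N * real T)) / \<eta> + 1
         + 4 * \<eta> * \<beta>\<^sup>2 * real T * ln (1 + 2 * \<beta> * real T * N)"
    unfolding regret_eq
    using expected_regret_le[of T S] assms \<eta>_pos by (simp add: field_simps power2_eq_square)
qed

lemma tuned_rate_le:
  fixes \<beta> T \<Lambda> L lnN S c :: real
  assumes "\<beta> > 0" "T > 0" "\<Lambda> > 0" "L > 0" "lnN + 1 \<le> \<Lambda>" "1 \<le> c" "c \<le> S"
  defines "\<eta> \<equiv> sqrt (c * \<Lambda> / (4 * \<beta>\<^sup>2 * T * L))"
  shows "(lnN + 1 + (S - 1) * \<Lambda>) / \<eta> + 4 * \<eta> * \<beta>\<^sup>2 * T * L
    \<le> 2 * \<beta> * (S / sqrt c + sqrt c) * sqrt (T * \<Lambda> * L)"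
proof -
  define u where "u = sqrt (T * L)"
  define v where "v = sqrt \<Lambda>"
  define w where "w = sqrt c"
  have u: "u > 0" "u\<^sup>2 = T * L" using assms by (auto simp: u_def)
  have v: "v > 0" "v\<^sup>2 = \<Lambda>" using assms by (auto simp: v_def)
  have w: "w > 0" "w\<^sup>2 = c" using assms by (auto simp: w_def)
  have \<eta>_eq: "\<eta> = w * v / (2 * \<beta> * u)"
  proof -
    have "c * \<Lambda> / (4 * \<beta>\<^sup>2 * T * L) = (w * v / (2 * \<beta> * u))\<^sup>2"
      by (simp add: u(2) v(2) w(2) power_divide power_mult_distrib mult_ac)
    then show ?thesis using u v w assms(1) by (simp add: \<eta>_def)
  qed
  have \<eta>_pos: "\<eta> > 0" using u v w assms(1) by (simp add: \<eta>_eq)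
  have "(lnN + 1 + (S - 1) * \<Lambda>) / \<eta> \<le> S * \<Lambda> / \<eta>"
    using assms \<eta>_pos by (intro divide_right_mono) (auto simp: algebra_simps)
  also have "S * \<Lambda> / \<eta> = 2 * \<beta> * S / w * u * v"
    using u v w assms(1) by (simp add: \<eta>_eq field_simps power2_eq_square v(2)[symmetric])
  finally have "(lnN + 1 + (S - 1) * \<Lambda>) / \<eta> \<le> 2 * \<beta> * S / w * u * v" .
  moreover have "4 * \<eta> * \<beta>\<^sup>2 * T * L = 2 * \<beta> * w * u * v"
    using u v w assms(1) by (simp add: \<eta>_eq field_simps power2_eq_square u(2)[symmetric])
  moreover have "sqrt (T * \<Lambda> * L) = u * v"
    by (simp add: u_def v_def real_sqrt_mult[symmetric] mult_ac)
  ultimately show ?thesis by (simp add: w_def[symmetric] algebra_simps)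
qed

lemma short_horizon_le:
  fixes \<beta> T \<Lambda> L S c :: real
  assumes "\<beta> > 0" "1 \<le> T" "T \<le> 2" "\<Lambda> \<ge> 1 / 2" "L \<ge> 1 / 2" "1 \<le> c" "c \<le> S"
  shows "\<beta> * T \<le> 2 * \<beta> * (S / sqrt c + sqrt c) * sqrt (T * \<Lambda> * L)"
proof -
  have "(T / 4)\<^sup>2 \<le> T * (1 / 2 * (1 / 2))" using assms by (simp add: power2_eq_square field_simps)
  also have "\<dots> \<le> T * (\<Lambda> * L)" using assms by (intro mult_left_mono mult_mono) auto
  finally have "T / 4 \<le> sqrt (T * \<Lambda> * L)" by (intro real_le_rsqrt) (simp add: mult_ac)
  moreover have "2 \<le> S / sqrt c + sqrt c"
  proof -
    have "sqrt c \<le> S / sqrt c" using assms by (simp add: field_simps)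
    moreover have "1 \<le> sqrt c" using assms by simp
    ultimately show ?thesis by linarith
  qed
  ultimately have "T / 4 * 2 \<le> sqrt (T * \<Lambda> * L) * (S / sqrt c + sqrt c)"
    using assms by (intro mult_mono) auto
  then have "\<beta> * T \<le> \<beta> * (2 * (sqrt (T * \<Lambda> * L) * (S / sqrt c + sqrt c)))"
    using assms(1) by (intro mult_left_mono) (auto simp: mult.commute)
  then show ?thesis by (simp only: mult_ac)
qed

lemma tuning_log_bounds:
  fixes \<beta> T N :: real
  assumes "\<beta> > 0" "T \<ge> 1" "N \<ge> 2" "2 * \<beta> * T > 1"
  shows "ln (N * T) \<ge> 1 / 2"
    and "ln (1 + 2 * \<beta> * T * N) \<le> ln (2 * \<beta> * T * N^3 + N + 2)"
    and "ln (2 * \<beta> * T * N^3 + N + 2) \<ge> 1 / 2"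
    and "T \<ge> 3 \<Longrightarrow> ln N + 1 \<le> ln (N * T)"
proof -
  have "2 * 1 \<le> N * T" using assms by (intro mult_mono) auto
  then show "ln (N * T) \<ge> 1 / 2" using ln_2_ge_half ln_mono[of 2 "N * T"] by linarith
  have "N * 1 \<le> N * (N * N)" using assms mult_mono[of 1 N 1 N] by (intro mult_left_mono) auto
  then have "2 * \<beta> * T * N \<le> 2 * \<beta> * T * N^3"
    using assms by (intro mult_left_mono) (auto simp: power3_eq_cube)
  moreover have "0 \<le> 2 * \<beta> * T * N" using assms by simp
  ultimately show tail: "ln (1 + 2 * \<beta> * T * N) \<le> ln (2 * \<beta> * T * N^3 + N + 2)"
    using assms by (intro ln_mono) linarith+
  have "2 * \<beta> * T * 1 \<le> 2 * \<beta> * T * N" using assms by (intro mult_left_mono) auto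
  then have "2 \<le> 1 + 2 * \<beta> * T * N" using assms by linarith
  then have "ln 2 \<le> ln (1 + 2 * \<beta> * T * N)" by (intro ln_mono) auto
  then show "ln (2 * \<beta> * T * N^3 + N + 2) \<ge> 1 / 2" using tail ln_2_ge_half by linarith
  assume "T \<ge> 3"
  then have "ln 3 \<le> ln T" by (intro ln_mono) auto
  moreover have "ln 3 \<ge> (1::real)" using exp_le by (simp add: ln_ge_iff)
  moreover have "ln (N * T) = ln N + ln T" using assms by (simp add: ln_mult)
  ultimately show "ln N + 1 \<le> ln (N * T)" by linarith
qed

text \<open>For \<open>\<beta> T < 1\<close> or \<open>T \<le> 2\<close> the trivial bound \<open>\<beta> T\<close> already suffices; otherwise
  \<open>\<gamma> \<le> 1 / 2\<close> and the potential bound applies.\<close>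

lemma fsf_tuned_regret_le:
  fixes h b c :: real and D T S :: nat and I :: "nat set" and d :: "nat \<Rightarrow> nat"
  assumes "T \<ge> 1" "h > 0" "b > 0" "I \<subseteq> {0..D}" "card I \<ge> 2"
    and \<beta>T: "2 * nv_beta h b D * real T > 1" and "S \<ge> 1" and "\<forall>t\<in>{1..T}. d t \<in> {0..D}"
    and c: "1 \<le> c" "c \<le> real S"
  shows "fsf_expected_regret h b D I T d S
      (sqrt (c * ln (real (card I) * real T) /
        (4 * (nv_beta h b D)\<^sup>2 * real T *
         ln (2 * nv_beta h b D * real T * real (card I)^3 + real (card I) + 2))))
      (1 / (2 * nv_beta h b D * real T)) (1 / real T)
    \<le> 2 * nv_beta h b D * (real S / sqrt c + sqrt c) *
        sqrt (real T * ln (real (card I) * real T) *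
              ln (2 * nv_beta h b D * real T * real (card I)^3 + real (card I) + 2))
      + 2 * nv_beta h b D * sqrt (real T * ln (real (card I))) + 2"
proof -
  define \<beta> where "\<beta> = nv_beta h b D"
  define N where "N = real (card I)"
  define \<Lambda> where "\<Lambda> = ln (N * real T)"
  define L where "L = ln (2 * \<beta> * real T * N^3 + N + 2)"
  define \<eta> where "\<eta> = sqrt (c * \<Lambda> / (4 * \<beta>\<^sup>2 * real T * L))"
  define bound where "bound = 2 * \<beta> * (real S / sqrt c + sqrt c) * sqrt (real T * \<Lambda> * L)"
  have T: "real T \<ge> 1" using assms(1) by simp
  have N: "N \<ge> 2" using assms(5) by (simp add: N_def)
  have \<beta>_pos: "\<beta> > 0"
  proof (rule ccontr)
    assume "\<not> \<beta> > 0"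
    then have "\<beta> * real T \<le> 0" using T by (simp add: mult_nonpos_nonneg)
    then show False using \<beta>T unfolding \<beta>_def by linarith
  qed
  note logs = tuning_log_bounds[OF \<beta>_pos T N \<beta>T[folded \<beta>_def], folded \<Lambda>_def L_def]
  have \<eta>_pos: "\<eta> > 0" using logs \<beta>_pos T c by (simp add: \<eta>_def)
  have "2 * \<beta> * sqrt (real T * ln N) \<ge> 0" using \<beta>_pos N T by simp
  moreover have "fsf_expected_regret h b D I T d S \<eta> (1 / (2 * \<beta> * real T)) (1 / real T) \<le> bound + 2"
  proof -
    note horizon = fsf_regret_with_horizon_tuning[OF assms(1-8) \<eta>_pos, folded \<beta>_def N_def]
    consider "\<beta> * real T < 1" | "\<beta> * real T \<ge> 1" "real T \<le> 2" | "\<beta> * real T \<ge> 1" "real T \<ge> 3"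
      using assms(1) by fastforce
    then show ?thesis
    proof cases
      case 1
      moreover have "bound \<ge> 0" using \<beta>_pos c logs T by (simp add: bound_def)
      ultimately show ?thesis using horizon(1) by linarith
    next
      case 2
      then show ?thesis using horizon(1) short_horizon_le[OF \<beta>_pos T _ logs(1,3) c] by (simp add: bound_def)
    next
      case 3
      have "(ln N + 1 + (real S - 1) * \<Lambda>) / \<eta> + 4 * \<eta> * \<beta>\<^sup>2 * real T * L \<le> bound"
        using tuned_rate_le[OF \<beta>_pos _ _ _ logs(4)[OF 3(2)] c] logs T by (simp add: \<eta>_def bound_def)
      moreover have "4 * \<eta> * \<beta>\<^sup>2 * real T * ln (1 + 2 * \<beta> * real T * N) \<le> 4 * \<eta> * \<beta>\<^sup>2 * real T * L"
        using logs(2) \<eta>_pos T by (intro mult_left_mono) auto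
      ultimately show ?thesis using horizon(2)[OF 3(1)] by (simp add: \<Lambda>_def)
    qed
  qed
  ultimately show ?thesis by (simp add: \<beta>_def N_def \<Lambda>_def L_def \<eta>_def bound_def)
qed

theorem theorem2:
  fixes h b :: real and D T S :: nat and I :: "nat set" and d :: "nat \<Rightarrow> nat"
  assumes "T \<ge> 1" "D \<ge> 1" "h > 0" "b > 0"
    and "I \<subseteq> {0..D}" "card I \<ge> 2"
    and "2 * nv_beta h b D * real T > 1"
    and "S \<ge> 1"
    and "\<forall>t\<in>{1..T}. d t \<in> {0..D}"
  shows
   "fsf_expected_regret h b D I T d S
      (sqrt (ln (real (card I) * real T) /
        (4 * (nv_beta h b D)^2 * real T *
         ln (2 * nv_beta h b D * real T * real (card I)^3 + real (card I) + 2))))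
      (1 / (2 * nv_beta h b D * real T)) (1 / real T)
    \<le> 2 * (real S + 1) * nv_beta h b D *
        sqrt (real T * ln (real (card I) * real T) *
              ln (2 * nv_beta h b D * real T * real (card I)^3 + real (card I) + 2))
      + 2 * nv_beta h b D * sqrt (real T * ln (real (card I))) + 2
   \<and>
   fsf_expected_regret h b D I T d S
      (sqrt (real S * ln (real (card I) * real T) /
        (4 * (nv_beta h b D)^2 * real T *
         ln (2 * nv_beta h b D * real T * real (card I)^3 + real (card I) + 2))))
      (1 / (2 * nv_beta h b D * real T)) (1 / real T)
    \<le> 4 * nv_beta h b D *
        sqrt (real S * real T * ln (real (card I) * real T) *
              ln (2 * nv_beta h b D * real T * real (card I)^3 + real (card I) + 2))
      + 2 * nv_beta h b D * sqrt (real T * ln (real (card I))) + 2"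
proof
  show "fsf_expected_regret h b D I T d S
      (sqrt (ln (real (card I) * real T) /
        (4 * (nv_beta h b D)^2 * real T *
         ln (2 * nv_beta h b D * real T * real (card I)^3 + real (card I) + 2))))
      (1 / (2 * nv_beta h b D * real T)) (1 / real T)
    \<le> 2 * (real S + 1) * nv_beta h b D *
        sqrt (real T * ln (real (card I) * real T) *
              ln (2 * nv_beta h b D * real T * real (card I)^3 + real (card I) + 2))
      + 2 * nv_beta h b D * sqrt (real T * ln (real (card I))) + 2"
    using fsf_tuned_regret_le[OF assms(1,3-9), of 1] assms(8) by (simp add: algebra_simps)
  have "real S / sqrt (real S) + sqrt (real S) = 2 * sqrt (real S)" by (simp add: real_div_sqrt)
  then show "fsf_expected_regret h b D I T d S
      (sqrt (real S * ln (real (card I) * real T) /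
        (4 * (nv_beta h b D)^2 * real T *
         ln (2 * nv_beta h b D * real T * real (card I)^3 + real (card I) + 2))))
      (1 / (2 * nv_beta h b D * real T)) (1 / real T)
    \<le> 4 * nv_beta h b D *
        sqrt (real S * real T * ln (real (card I) * real T) *
              ln (2 * nv_beta h b D * real T * real (card I)^3 + real (card I) + 2))
      + 2 * nv_beta h b D * sqrt (real T * ln (real (card I))) + 2"
    using fsf_tuned_regret_le[OF assms(1,3-9), of "real S"] assms(8) by (simp add: real_sqrt_mult mult_ac)
qed

end
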